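(* Let $a,b\ge0$, let $n$ be a measure on $(0,\infty)$ with $\int_0^\infty\min\{y^2,y\}n(dy)<\infty$, set $\tilde n(dy)=n([y,\infty))\,dy$, and let $$\Phi(\lambda)=\int_0^\lambda\frac{du}{au+b+\int_0^\infty(1-e^{-uy})\tilde n(dy)}.$$ Suppose $\Phi(1)<\infty$. Then for each $\delta>0$ and all $f,g\in\mathcal{F}_0$, $$\mathcal{E}^\delta(f,g)=a\int xf'(x)g'(x)\,\nu_\delta(dx)+\int x\int_0^\infty\tilde n(dy)\,f'(x+y)\big(g(x+y)-g(x)\big)\,\nu_\delta(dx).$$
   Context: For $\delta>0$, the CBCI-process with quadruplet $(a,b,n,\delta)$ is the Markov process on $\mathbb{R}_+$ with generator $L_\delta f(x)=axf''(x)-bxf'(x)+x\int_0^\infty[f(x+y)-f(x)-yf'(x)]n(dy)+\delta f'(x)$. When $\Phi(1)<\infty$ it has a unique stationary distribution $\nu_\delta$, given by $\int e^{-\lambda x}\nu_\delta(dx)=e^{-\delta\Phi(\lambda)}$. $\mathcal{E}^\delta(f,g)=\int(-L_\delta f)g\,d\nu_\delta$. $\mathcal{F}_0$ is the linear span of the functions $x\mapsto e^{-\lambda x}$, $\lambda\ge0$. *)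

theory Defs
  imports "HOL-Probability.Probability"
begin

definition ntilde :: "real measure \<Rightarrow> real measure" where
  "ntilde n = density lborel (\<lambda>y. indicator {0<..} y * emeasure n {y..})"

definition Phi :: "real \<Rightarrow> real \<Rightarrow> real measure \<Rightarrow> real \<Rightarrow> ennreal" where
  "Phi a b n lam =
     (\<integral>\<^sup>+ u. indicator {0..lam} u *
        inverse (ennreal (a * u + b) + (\<integral>\<^sup>+ y. ennreal (1 - exp (- u * y)) \<partial>ntilde n)) \<partial>lborel)"

definition F0 :: "(real \<Rightarrow> real) set" where
  "F0 = {f. \<exists>S c. finite S \<and> S \<subseteq> {0..} \<and> f = (\<lambda>x. \<Sum>l\<in>S. c l * exp (- l * x))}"

text \<open>Generator L_delta of the CBCI-process with quadruplet (a,b,n,delta).\<close>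
definition gen :: "real \<Rightarrow> real \<Rightarrow> real measure \<Rightarrow> real \<Rightarrow> (real \<Rightarrow> real) \<Rightarrow> real \<Rightarrow> real" where
  "gen a b n \<delta> f x =
     a * x * deriv (deriv f) x - b * x * deriv f x
     + x * (\<integral> y. f (x + y) - f x - y * deriv f x \<partial>n)
     + \<delta> * deriv f x"

definition dirichlet :: "real \<Rightarrow> real \<Rightarrow> real measure \<Rightarrow> real \<Rightarrow> real measure
    \<Rightarrow> (real \<Rightarrow> real) \<Rightarrow> (real \<Rightarrow> real) \<Rightarrow> real" where
  "dirichlet a b n \<delta> \<nu> f g = (\<integral> x. (- gen a b n \<delta> f x) * g x \<partial>\<nu>)"

end

theory Submission
  imports Defs
begin

text \<open>
  Both sides are bilinear in \<open>(f, g)\<close>, so it suffices to take \<open>f = e l\<close>, \<open>g = e m\<close> with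
  \<open>e l x = exp (-l x)\<close> and \<open>l, m \<ge> 0\<close>. By Fubini,
  \<open>\<integral>(exp (-u y) - 1 + u y) n(dy) = u \<integral>(1 - exp (-u y)) ntilde(dy)\<close>, hence
  \<open>L\<^sub>\<delta> (e l) x = e l x (x l \<phi>(l) - \<delta> l)\<close>, where \<open>\<phi>(u) = a u + b + \<integral>(1 - exp (-u y)) ntilde(dy)\<close>
  is the denominator in \<open>\<Phi>\<close>. Finiteness of \<open>\<Phi>(1)\<close> forces \<open>\<phi> > 0\<close> on \<open>(0, \<infinity>)\<close>, so
  \<open>\<Phi>' = 1 / \<phi>\<close> there, and differentiating \<open>\<integral>exp (-s x) \<nu>(dx) = exp (-\<delta> \<Phi>(s))\<close> gives
  \<open>\<delta> \<integral>exp (-s x) \<nu>(dx) = \<phi>(s) M(s)\<close> with \<open>M(s) = \<integral>x exp (-s x) \<nu>(dx)\<close>. Hence both sides equal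
  \<open>l (\<phi>(l+m) - \<phi>(l)) M(l+m) = (a l m + l \<integral>(exp (-l y) - exp (-(l+m) y)) ntilde(dy)) M(l+m)\<close>.
\<close>

lemma abs_exp_minus_one_minus_le: "\<bar>exp z - 1 - z\<bar> \<le> z\<^sup>2 * exp \<bar>z\<bar>" for z :: real
proof -
  obtain t where t: "\<bar>t\<bar> \<le> \<bar>z\<bar>" and eq: "exp z = 1 + z + exp t / 2 * z\<^sup>2"
    using Maclaurin_exp_le[of z 2] by (auto simp: numeral_2_eq_2)
  have "exp t \<le> exp \<bar>z\<bar>" using t by simp
  then have "exp t / 2 \<le> exp \<bar>z\<bar>" using exp_gt_zero[of t] by linarith
  then have "exp t / 2 * z\<^sup>2 \<le> exp \<bar>z\<bar> * z\<^sup>2" by (rule mult_right_mono) simp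
  then show ?thesis by (simp add: eq mult.commute)
qed

lemma mult_exp_neg_le: "0 \<le> x \<Longrightarrow> 0 < s \<Longrightarrow> x * exp (-(s*x)) \<le> 1 / s" for x s :: real
proof -
  assume "0 < s"
  have "s * x \<le> exp (s*x)" using exp_ge_add_one_self[of "s*x"] by linarith
  then show ?thesis using \<open>0 < s\<close> by (simp add: exp_minus field_simps)
qed

lemma exp_neg_second_difference_le:
  fixes s h x :: real assumes x: "0 \<le> x" and s: "0 < s" and h: "\<bar>h\<bar> \<le> s/2"
  shows "\<bar>exp (-((s+h)*x)) - exp (-(s*x)) + h * (x * exp (-(s*x)))\<bar> \<le> (4/s)\<^sup>2 * h\<^sup>2"
proof -
  have "\<bar>h*x\<bar> \<le> s/2*x" using x h mult_right_mono[of "\<bar>h\<bar>" "s/2" x] by (simp add: abs_mult)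
  have "\<bar>exp (-(h*x)) - 1 - (-(h*x))\<bar> \<le> (h*x)\<^sup>2 * exp (s/2*x)"
  proof -
    have "(h*x)\<^sup>2 * exp \<bar>-(h*x)\<bar> \<le> (h*x)\<^sup>2 * exp (s/2*x)"
      using \<open>\<bar>h*x\<bar> \<le> s/2*x\<close> by (intro mult_left_mono) auto
    with abs_exp_minus_one_minus_le[of "-(h*x)"] show ?thesis by simp
  qed
  moreover have "exp (-((s+h)*x)) - exp (-(s*x)) + h * (x * exp (-(s*x)))
      = exp (-(s*x)) * (exp (-(h*x)) - 1 - (-(h*x)))"
    by (simp add: algebra_simps flip: exp_add)
  ultimately have "\<bar>exp (-((s+h)*x)) - exp (-(s*x)) + h * (x * exp (-(s*x)))\<bar>
      \<le> exp (-(s*x)) * ((h*x)\<^sup>2 * exp (s/2*x))"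
    by (simp only: abs_mult abs_exp_cancel mult_left_mono exp_ge_zero)
  also have "\<dots> = h\<^sup>2 * (x\<^sup>2 * (exp (-(s*x)) * exp (s/2*x)))"
    by (simp add: power_mult_distrib mult_ac)
  also have "\<dots> \<le> h\<^sup>2 * (4/s)\<^sup>2"
  proof (rule mult_left_mono)
    have "exp (-(s*x)) * exp (s/2*x) = (exp (-(s/4*x)))\<^sup>2"
    proof -
      have "(exp (-(s/4*x)))\<^sup>2 = exp (2 * (-(s/4*x)))" by (rule exp_double[symmetric])
      also have "\<dots> = exp (-(s*x) + s/2*x)" by (simp add: field_simps)
      finally show ?thesis by (simp only: exp_add)
    qed
    then have "x\<^sup>2 * (exp (-(s*x)) * exp (s/2*x)) = (x * exp (-(s/4*x)))\<^sup>2"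
      by (simp add: power_mult_distrib)
    also have "\<dots> \<le> (4/s)\<^sup>2"
      using mult_exp_neg_le[of x "s/4"] x s by (intro power_mono) auto
    finally show "x\<^sup>2 * (exp (-(s*x)) * exp (s/2*x)) \<le> (4/s)\<^sup>2" .
  qed simp
  finally show ?thesis by (simp add: mult.commute)
qed

lemma exp_neg_remainder_nonneg: "0 \<le> exp (-(l*y)) - 1 + l*y" for l y :: real
  using exp_ge_add_one_self[of "-(l*y)"] by simp

lemma exp_neg_remainder_le_min:
  fixes l y :: real assumes "0 < y" "0 \<le> l"
  shows "exp (-(l*y)) - 1 + l*y \<le> (l\<^sup>2 * exp l + l) * min (y\<^sup>2) y"
proof (cases "y \<le> 1")
  case True
  have "exp (-(l*y)) - 1 + l*y \<le> (l*y)\<^sup>2 * exp \<bar>l*y\<bar>"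
    using abs_exp_minus_one_minus_le[of "-(l*y)"] by simp
  also have "\<dots> \<le> (l*y)\<^sup>2 * exp l"
    using True assms by (intro mult_left_mono) (auto simp: abs_mult mult_left_le)
  also have "\<dots> = (l\<^sup>2 * exp l) * y\<^sup>2" by (simp add: power_mult_distrib)
  also have "\<dots> \<le> (l\<^sup>2 * exp l + l) * y\<^sup>2" using assms by (intro mult_right_mono) auto
  finally show ?thesis using True assms by (simp add: power2_eq_square mult_left_le)
next
  case False
  have "exp (-(l*y)) - 1 + l*y \<le> l*y" using assms by simp
  also have "\<dots> \<le> (l\<^sup>2 * exp l + l) * y" using assms by (simp add: algebra_simps)
  finally show ?thesis using False assms by (simp add: power2_eq_square)
qed

lemma ennreal_ex_of_nat_mult_ge_one: "0 < (e::ennreal) \<Longrightarrow> \<exists>k. 1 \<le> of_nat (Suc k) * e"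
proof (cases e)
  case (real r)
  assume "0 < e"
  then have "0 < r" using real by simp
  then obtain k where "inverse (of_nat (Suc k)) < r" using reals_Archimedean by blast
  then have "1 \<le> real (Suc k) * r" using \<open>0 < r\<close> by (simp add: field_simps)
  then have "ennreal 1 \<le> ennreal (real (Suc k) * r)" by (rule ennreal_leI)
  then show ?thesis using real \<open>0 < r\<close> by (auto simp: ennreal_mult ennreal_of_nat_eq_real_of_nat)
qed simp

lemma sigma_finite_measure_if_nn_integral_pos_finite:
  fixes f :: "'a \<Rightarrow> ennreal"
  assumes f[measurable]: "f \<in> borel_measurable M" and pos: "\<And>x. x \<in> space M \<Longrightarrow> 0 < f x"
    and fin: "(\<integral>\<^sup>+x. f x \<partial>M) < \<infinity>"
  shows "sigma_finite_measure M"
proof (unfold_locales, intro exI conjI)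
  define A where "A k = {x\<in>space M. 1 \<le> of_nat (Suc k) * f x}" for k :: nat
  show "countable (range A)" by simp
  show "range A \<subseteq> sets M"
  proof safe
    fix k show "A k \<in> sets M" unfolding A_def by measurable
  qed
  show "\<Union>(range A) = space M"
    using ennreal_ex_of_nat_mult_ge_one[OF pos] by (auto simp: A_def)
  show "\<forall>a\<in>range A. emeasure M a \<noteq> \<infinity>"
  proof safe
    fix k
    have "emeasure M (A k) \<le> of_nat (Suc k) * (\<integral>\<^sup>+x. f x * indicator (space M) x \<partial>M)"
      using nn_integral_Markov_inequality[of f "space M" M "of_nat (Suc k)"] by (simp add: A_def)
    also have "\<dots> = of_nat (Suc k) * (\<integral>\<^sup>+x. f x \<partial>M)"
      by (intro arg_cong2[where f="(*)"] refl nn_integral_cong) simp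
    also have "\<dots> < \<infinity>" using fin by (simp add: ennreal_mult_less_top of_nat_less_top)
    finally show "emeasure M (A k) = \<infinity> \<Longrightarrow> False" by simp
  qed
qed

context
  fixes M :: "real measure"
  assumes finite_M: "finite_measure M" and sets_M [measurable_cong]: "sets M = sets borel"
    and AE_nonneg: "AE x in M. 0 \<le> x"
begin

interpretation finite_measure M by (fact finite_M)

lemma integrable_exp_neg_mult: "0 \<le> s \<Longrightarrow> integrable M (\<lambda>x. exp (-(s*x)))"
  by (rule integrable_const_bound[where B=1]) (use AE_nonneg in \<open>auto elim!: eventually_mono\<close>)

lemma integrable_mult_exp_neg_mult: "0 < s \<Longrightarrow> integrable M (\<lambda>x. x * exp (-(s*x)))"
  by (rule integrable_const_bound[where B="1/s"])
    (use AE_nonneg mult_exp_neg_le in \<open>auto elim!: eventually_mono\<close>)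

lemma laplace_difference_quotient_le:
  assumes s: "0 < s" and h: "h \<noteq> 0" "\<bar>h\<bar> \<le> s/2"
  defines "L \<equiv> \<lambda>s. \<integral>x. exp (-(s*x)) \<partial>M" and "Lx \<equiv> \<integral>x. x * exp (-(s*x)) \<partial>M"
  shows "\<bar>(L (s+h) - L s) / h + Lx\<bar> \<le> (4/s)\<^sup>2 * measure M (space M) * \<bar>h\<bar>"
proof -
  define C where "C = (4/s)\<^sup>2 * measure M (space M)"
  have ints: "integrable M (\<lambda>x. exp (-((s+h)*x)))" "integrable M (\<lambda>x. exp (-(s*x)))"
      "integrable M (\<lambda>x. x * exp (-(s*x)))"
    using h s integrable_exp_neg_mult[of "s+h"] integrable_exp_neg_mult[of s] integrable_mult_exp_neg_mult[of s]
    by auto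
  have eq: "L (s+h) - L s + h * Lx = (\<integral>x. exp (-((s+h)*x)) - exp (-(s*x)) + h * (x * exp (-(s*x))) \<partial>M)"
    unfolding L_def Lx_def
    by (simp only: Bochner_Integration.integral_add[OF Bochner_Integration.integrable_diff[OF ints(1,2)]
          integrable_mult_right[OF ints(3)]] Bochner_Integration.integral_diff[OF ints(1,2)] integral_mult_right_zero)
  have "\<bar>\<integral>x. exp (-((s+h)*x)) - exp (-(s*x)) + h * (x * exp (-(s*x))) \<partial>M\<bar>
      \<le> (\<integral>x. \<bar>exp (-((s+h)*x)) - exp (-(s*x)) + h * (x * exp (-(s*x)))\<bar> \<partial>M)"
    by (rule integral_abs_bound)
  also have "\<dots> \<le> (\<integral>x. (4/s)\<^sup>2 * h\<^sup>2 \<partial>M)"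
  proof (rule integral_mono_AE)
    show "integrable M (\<lambda>x. \<bar>exp (-((s+h)*x)) - exp (-(s*x)) + h * (x * exp (-(s*x)))\<bar>)"
      using ints by (intro integrable_abs Bochner_Integration.integrable_add
          Bochner_Integration.integrable_diff integrable_mult_right)
    show "AE x in M. \<bar>exp (-((s+h)*x)) - exp (-(s*x)) + h * (x * exp (-(s*x)))\<bar> \<le> (4/s)\<^sup>2 * h\<^sup>2"
      using AE_nonneg by eventually_elim (rule exp_neg_second_difference_le[OF _ s h(2)])
  qed (rule integrable_const)
  also have "\<dots> = C * h\<^sup>2" by (simp add: C_def mult_ac)
  finally have num: "\<bar>L (s+h) - L s + h * Lx\<bar> \<le> C * h\<^sup>2" by (simp only: eq)
  have "(L (s+h) - L s) / h + Lx = (L (s+h) - L s + h * Lx) / h"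
    using h by (simp add: add_divide_distrib)
  then have "\<bar>(L (s+h) - L s) / h + Lx\<bar> = \<bar>L (s+h) - L s + h * Lx\<bar> / \<bar>h\<bar>"
    by (simp add: abs_divide)
  also have "\<dots> \<le> C * h\<^sup>2 / \<bar>h\<bar>" using num by (rule divide_right_mono) simp
  also have "\<dots> = C * \<bar>h\<bar>"
    using h by (simp add: divide_simps power2_eq_square mult.assoc)
  finally show ?thesis by (simp only: C_def)
qed

lemma laplace_transform_has_real_derivative:
  assumes s: "0 < s"
  shows "((\<lambda>s. \<integral>x. exp (-(s*x)) \<partial>M) has_real_derivative - (\<integral>x. x * exp (-(s*x)) \<partial>M)) (at s)"
proof -
  define L where "L s = (\<integral>x. exp (-(s*x)) \<partial>M)" for s
  define Lx where "Lx = (\<integral>x. x * exp (-(s*x)) \<partial>M)"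
  define C where "C = (4/s)\<^sup>2 * measure M (space M)"
  have "((\<lambda>h. (L (s+h) - L s) / h + Lx) \<longlongrightarrow> 0) (at 0)"
  proof (rule Lim_null_comparison)
    show "\<forall>\<^sub>F h in at 0. norm ((L (s+h) - L s) / h + Lx) \<le> C * \<bar>h\<bar>"
      unfolding eventually_at L_def Lx_def C_def using s laplace_difference_quotient_le
      by (intro exI[of _ "s/2"]) auto
    show "((\<lambda>h. C * \<bar>h\<bar>) \<longlongrightarrow> 0) (at 0)"
      by (auto intro!: tendsto_eq_intros)
  qed
  from tendsto_add[OF this tendsto_const[of "-Lx"]]
  show ?thesis by (simp add: DERIV_def L_def Lx_def)
qed

end

lemma nn_integral_ntilde:
  fixes n :: "real measure" and h :: "real \<Rightarrow> ennreal"
  assumes n: "sigma_finite_measure n" and sets_n[measurable_cong]: "sets n = sets borel"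
    and h[measurable]: "h \<in> borel_measurable borel"
  shows "(\<integral>\<^sup>+y. h y \<partial>ntilde n) = (\<integral>\<^sup>+y. (\<integral>\<^sup>+z. indicator {0<..y} z * h z \<partial>lborel) \<partial>n)"
proof -
  interpret N: sigma_finite_measure n by (fact n)
  interpret P: pair_sigma_finite lborel n
    by (intro pair_sigma_finite.intro lborel.sigma_finite_measure_axioms n)
  have [measurable]: "(\<lambda>z. emeasure n {z..}) \<in> borel_measurable borel"
  proof (rule N.measurable_emeasure)
    have "{p \<in> space (borel \<Otimes>\<^sub>M n). snd p \<in> {fst p..}} = {p \<in> space (borel \<Otimes>\<^sub>M n). fst p \<le> snd p}"
      by auto
    also have "\<dots> \<in> sets (borel \<Otimes>\<^sub>M n)" by measurable
    finally show "{p \<in> space (borel \<Otimes>\<^sub>M n). snd p \<in> {fst p..}} \<in> sets (borel \<Otimes>\<^sub>M n)" .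
  qed (use sets_eq_imp_space_eq[OF sets_n] in simp)
  have "(\<integral>\<^sup>+y. h y \<partial>ntilde n) = (\<integral>\<^sup>+z. indicator {0<..} z * emeasure n {z..} * h z \<partial>lborel)"
    unfolding ntilde_def by (rule nn_integral_density) auto
  also have "\<dots> = (\<integral>\<^sup>+z. (\<integral>\<^sup>+y. indicator {0<..y} z * h z \<partial>n) \<partial>lborel)"
  proof (rule nn_integral_cong)
    fix z :: real
    have "indicator {0<..} z * emeasure n {z..} * h z = (\<integral>\<^sup>+y. (indicator {0<..} z * h z) * indicator {z..} y \<partial>n)"
      by (subst nn_integral_cmult_indicator) (auto simp: mult_ac)
    also have "\<dots> = (\<integral>\<^sup>+y. indicator {0<..y} z * h z \<partial>n)"
      by (intro nn_integral_cong) (auto simp: indicator_def)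
    finally show "indicator {0<..} z * emeasure n {z..} * h z = (\<integral>\<^sup>+y. indicator {0<..y} z * h z \<partial>n)" .
  qed
  also have "\<dots> = (\<integral>\<^sup>+y. (\<integral>\<^sup>+z. indicator {0<..y} z * h z \<partial>lborel) \<partial>n)"
  proof (rule P.Fubini'[symmetric])
    have "(\<lambda>(z, y). indicator {p :: real \<times> real. 0 < fst p \<and> fst p \<le> snd p} (z, y) * h z :: ennreal)
        \<in> borel_measurable (lborel \<Otimes>\<^sub>M n)" by measurable
    then show "(\<lambda>(z, y). indicator {0<..y} z * h z) \<in> borel_measurable (lborel \<Otimes>\<^sub>M n)"
      by (simp add: indicator_def case_prod_beta)
  qed
  finally show ?thesis .
qed

lemma nn_integral_one_minus_exp_interval:
  fixes u y :: real assumes u: "0 < u" and y: "0 < y"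
  shows "(\<integral>\<^sup>+z. indicator {0<..y} z * ennreal (1 - exp (-(u*z))) \<partial>lborel)
    = ennreal ((exp (-(u*y)) - 1 + u*y) / u)"
proof -
  have "(\<integral>\<^sup>+z. indicator {0<..y} z * ennreal (1 - exp (-(u*z))) \<partial>lborel)
      = (\<integral>\<^sup>+z. ennreal (indicator {0..y} z * (1 - exp (-(u*z)))) \<partial>lborel)"
    by (intro nn_integral_cong) (auto simp: indicator_def)
  also have "\<dots> = ennreal ((y + exp (-(u*y)) / u) - (0 + exp (-(u*0)) / u))"
  proof (rule nn_integral_has_integral_lebesgue)
    show "0 \<le> 1 - exp (-(u*z))" if "z \<in> {0..y}" for z using that u by auto
    show "((\<lambda>z. 1 - exp (-(u*z))) has_integral (y + exp (-(u*y)) / u) - (0 + exp (-(u*0)) / u)) {0..y}"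
    proof (rule fundamental_theorem_of_calculus)
      fix z :: real
      have "((\<lambda>z. z + exp (-(u*z)) / u) has_real_derivative 1 - exp (-(u*z))) (at z within {0..y})"
        using u by (auto intro!: derivative_eq_intros)
      then show "((\<lambda>z. z + exp (-(u*z)) / u) has_vector_derivative 1 - exp (-(u*z))) (at z within {0..y})"
        by (simp add: has_real_derivative_iff_has_vector_derivative)
    qed (use y in simp)
  qed
  also have "(y + exp (-(u*y)) / u) - (0 + exp (-(u*0)) / u) = (exp (-(u*y)) - 1 + u*y) / u"
    using u by (simp add: field_simps)
  finally show ?thesis .
qed

lemma enn2real_nn_integral_has_real_derivative:
  fixes H :: "real \<Rightarrow> ennreal" and h :: "real \<Rightarrow> real"
  assumes H[measurable]: "H \<in> borel_measurable borel" and "a \<le> c" "c < t"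
    and finite: "(\<integral>\<^sup>+u. indicator {a..c} u * H u \<partial>lborel) < \<infinity>"
    and H_eq: "\<And>u. c \<le> u \<Longrightarrow> H u = ennreal (h u)"
    and cont: "continuous_on {c..} h" and nonneg: "\<And>u. c \<le> u \<Longrightarrow> 0 \<le> h u"
  shows "((\<lambda>x. enn2real (\<integral>\<^sup>+u. indicator {a..x} u * H u \<partial>lborel)) has_real_derivative h t) (at t)"
proof -
  define A where "A = (\<integral>\<^sup>+u. indicator {a..<c} u * H u \<partial>lborel)"
  have "A \<le> (\<integral>\<^sup>+u. indicator {a..c} u * H u \<partial>lborel)"
    unfolding A_def by (intro nn_integral_mono) (auto simp: indicator_def)
  with finite have A: "A < \<infinity>" by simp
  have cont_c: "continuous_on {c..x} h" for x by (rule continuous_on_subset[OF cont]) auto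
  have split: "enn2real (\<integral>\<^sup>+u. indicator {a..x} u * H u \<partial>lborel) = enn2real A + integral {c..x} h"
    if x: "c \<le> x" for x
  proof -
    have "(\<integral>\<^sup>+u. indicator {a..x} u * H u \<partial>lborel)
        = (\<integral>\<^sup>+u. indicator {a..<c} u * H u + indicator {c..x} u * H u \<partial>lborel)"
      using x \<open>a \<le> c\<close> by (intro nn_integral_cong) (auto simp: indicator_def)
    also have "\<dots> = A + (\<integral>\<^sup>+u. indicator {c..x} u * H u \<partial>lborel)"
      unfolding A_def by (rule nn_integral_add) auto
    also have "(\<integral>\<^sup>+u. indicator {c..x} u * H u \<partial>lborel) = (\<integral>\<^sup>+u. ennreal (indicator {c..x} u * h u) \<partial>lborel)"
      by (intro nn_integral_cong) (auto simp: indicator_def H_eq)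
    also have "\<dots> = ennreal (integral {c..x} h)"
      using nonneg integrable_continuous_interval[OF cont_c]
      by (intro nn_integral_has_integral_lebesgue) (auto intro: integrable_integral)
    finally have "(\<integral>\<^sup>+u. indicator {a..x} u * H u \<partial>lborel) = A + ennreal (integral {c..x} h)" .
    moreover have "0 \<le> integral {c..x} h"
      using nonneg integrable_continuous_interval[OF cont_c] by (intro integral_nonneg) auto
    ultimately show ?thesis using A by (simp add: enn2real_plus)
  qed
  have "((\<lambda>x. integral {c..x} h) has_real_derivative h t) (at t within {c..t+1})"
    using cont_c \<open>c < t\<close> by (intro integral_has_real_derivative) auto
  moreover have "at t within {c..t+1} = at t"
    using \<open>c < t\<close> by (intro at_within_interior) auto
  ultimately have "((\<lambda>x. enn2real A + integral {c..x} h) has_real_derivative h t) (at t)"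
    by (auto intro!: derivative_eq_intros)
  then show ?thesis
    by (rule has_field_derivative_transform_within_open[where S = "{c<..}"]) (use \<open>c < t\<close> split in auto)
qed

lemma deriv_exp_sum:
  fixes c :: "real \<Rightarrow> real"
  assumes "finite S"
  shows "deriv (\<lambda>x. \<Sum>l\<in>S. c l * exp (- l * x)) = (\<lambda>x. \<Sum>l\<in>S. c l * - l * exp (- l * x))"
proof
  fix x :: real
  have "((\<lambda>x. \<Sum>l\<in>S. c l * exp (- l * x)) has_real_derivative (\<Sum>l\<in>S. c l * - l * exp (- l * x))) (at x)"
    by (rule DERIV_sum) (auto intro!: derivative_eq_intros)
  then show "deriv (\<lambda>x. \<Sum>l\<in>S. c l * exp (- l * x)) x = (\<Sum>l\<in>S. c l * - l * exp (- l * x))"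
    by (rule DERIV_imp_deriv)
qed

locale cbci_mechanism =
  fixes a b :: real and n :: "real measure"
  assumes a_nonneg: "0 \<le> a" and b_nonneg: "0 \<le> b"
    and sets_n [measurable_cong]: "sets n = sets borel" and n_nonpos: "emeasure n {..0} = 0"
    and n_min_finite: "(\<integral>\<^sup>+ y. ennreal (min (y\<^sup>2) y) \<partial>n) < \<infinity>"
begin

lemma AE_n_pos: "AE y in n. 0 < y"
  using n_nonpos by (intro AE_I'[of "{..0}"]) (auto simp: null_sets_def)

lemma integrable_min: "integrable n (\<lambda>y. min (y\<^sup>2) y)"
  using AE_n_pos n_min_finite by (intro integrableI_nonneg) (auto elim!: eventually_mono)

lemma sigma_finite_n: "sigma_finite_measure n"
proof (rule sigma_finite_measure_if_nn_integral_pos_finite)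
  show "(\<lambda>y. ennreal (min (y\<^sup>2) y) + indicator {..0} y) \<in> borel_measurable n" by simp
  show "0 < ennreal (min (y\<^sup>2) y) + indicator {..0} y" for y
    by (cases "0 < y") (auto simp: power2_eq_square intro: add_nonneg_pos)
  have "(\<integral>\<^sup>+y. ennreal (min (y\<^sup>2) y) + indicator {..0} y \<partial>n) = (\<integral>\<^sup>+ y. ennreal (min (y\<^sup>2) y) \<partial>n) + emeasure n {..0}"
    by (subst nn_integral_add) auto
  then show "(\<integral>\<^sup>+y. ennreal (min (y\<^sup>2) y) + indicator {..0} y \<partial>n) < \<infinity>"
    using n_min_finite n_nonpos by simp
qed

definition levy :: "real \<Rightarrow> real" where
  "levy l = (\<integral>y. exp (-(l*y)) - 1 + l*y \<partial>n)"

lemma integrable_levy: "0 \<le> l \<Longrightarrow> integrable n (\<lambda>y. exp (-(l*y)) - 1 + l*y)"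
proof (rule Bochner_Integration.integrable_bound)
  show "integrable n (\<lambda>y. (l\<^sup>2 * exp l + l) * min (y\<^sup>2) y)"
    by (intro integrable_mult_right integrable_min)
  show "AE y in n. norm (exp (-(l*y)) - 1 + l*y) \<le> norm ((l\<^sup>2 * exp l + l) * min (y\<^sup>2) y)"
    if "0 \<le> l" using AE_n_pos
  proof eventually_elim
    case (elim y)
    from exp_neg_remainder_nonneg exp_neg_remainder_le_min[OF elim that] show ?case by simp
  qed
qed simp

lemma levy_nonneg: "0 \<le> levy l"
  unfolding levy_def by (intro integral_nonneg_AE AE_I2 exp_neg_remainder_nonneg)

lemma levy_0 [simp]: "levy 0 = 0"
  by (simp add: levy_def)

lemma convex_on_levy: "convex_on {0<..} levy"
proof (rule convex_onI)
  fix t u v :: real assume t: "0 < t" "t < 1" and uv: "u \<in> {0<..}" "v \<in> {0<..}"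
  have "exp (-(((1-t)*u + t * v)*y)) - 1 + ((1-t)*u + t * v)*y
      \<le> (1-t) * (exp (-(u*y)) - 1 + u*y) + t * (exp (-(v * y)) - 1 + v * y)" for y
  proof -
    have "exp (1 * ((1-t) *\<^sub>R (-(u*y)) + t *\<^sub>R (-(v * y))))
        \<le> (1-t) * exp (1 * (-(u*y))) + t * exp (1 * (-(v * y)))"
      using t by (intro convex_onD[OF convex_on_exp]) auto
    then show ?thesis by (simp add: algebra_simps)
  qed
  then have "levy ((1-t)*u + t * v)
      \<le> (\<integral>y. (1-t) * (exp (-(u*y)) - 1 + u*y) + t * (exp (-(v * y)) - 1 + v * y) \<partial>n)"
    unfolding levy_def using uv t
    by (intro integral_mono integrable_levy Bochner_Integration.integrable_add integrable_mult_right) auto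
  also have "\<dots> = (1-t) * levy u + t * levy v"
    unfolding levy_def using uv
    by (subst Bochner_Integration.integral_add) (auto intro!: integrable_mult_right integrable_levy)
  finally show "levy ((1-t) *\<^sub>R u + t *\<^sub>R v) \<le> (1-t) * levy u + t * levy v" by simp
qed (rule convex_real_interval)

lemma sets_ntilde [measurable_cong]: "sets (ntilde n) = sets borel"
  by (simp add: ntilde_def)

lemma AE_ntilde_pos: "AE y in ntilde n. 0 < y"
proof (rule AE_I')
  have "emeasure (ntilde n) {..0} = (\<integral>\<^sup>+y. indicator {..0} y \<partial>ntilde n)" by simp
  also have "\<dots> = (\<integral>\<^sup>+y. (\<integral>\<^sup>+z. indicator {0<..y} z * indicator {..0} z \<partial>lborel) \<partial>n)"
    by (rule nn_integral_ntilde[OF sigma_finite_n sets_n]) simp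
  also have "\<dots> = 0"
  proof -
    have "indicator {0<..y} z * indicator {..0} z = (0::ennreal)" for y z :: real
      by (simp add: indicator_def)
    then show ?thesis by (simp only:) simp
  qed
  finally show "{..0} \<in> null_sets (ntilde n)" by (simp add: null_sets_def)
qed auto

lemma nn_integral_ntilde_one_minus_exp:
  assumes u: "0 < u"
  shows "(\<integral>\<^sup>+y. ennreal (1 - exp (-(u*y))) \<partial>ntilde n) = ennreal (levy u / u)"
proof -
  have "(\<integral>\<^sup>+y. ennreal (1 - exp (-(u*y))) \<partial>ntilde n)
      = (\<integral>\<^sup>+y. (\<integral>\<^sup>+z. indicator {0<..y} z * ennreal (1 - exp (-(u*z))) \<partial>lborel) \<partial>n)"
    by (rule nn_integral_ntilde[OF sigma_finite_n sets_n]) simp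
  also have "\<dots> = (\<integral>\<^sup>+y. ennreal ((exp (-(u*y)) - 1 + u*y) / u) \<partial>n)"
    using AE_n_pos by (intro nn_integral_cong_AE) (auto elim!: eventually_mono simp: nn_integral_one_minus_exp_interval[OF u])
  also have "\<dots> = ennreal (\<integral>y. (exp (-(u*y)) - 1 + u*y) / u \<partial>n)"
    using u integrable_levy[of u] exp_neg_remainder_nonneg
    by (intro nn_integral_eq_integral integrable_divide_zero AE_I2) auto
  finally show ?thesis by (simp add: levy_def)
qed

definition tail_levy :: "real \<Rightarrow> real" where
  "tail_levy u = (\<integral>y. 1 - exp (-(u*y)) \<partial>ntilde n)"

lemma integrable_tail_levy: "0 \<le> u \<Longrightarrow> integrable (ntilde n) (\<lambda>y. 1 - exp (-(u*y)))"
  using nn_integral_ntilde_one_minus_exp[of u] AE_ntilde_pos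
  by (cases "u = 0") (auto intro!: integrableI_nonneg elim!: eventually_mono)

lemma nn_integral_ntilde_eq_tail_levy:
  "0 \<le> u \<Longrightarrow> (\<integral>\<^sup>+y. ennreal (1 - exp (-(u*y))) \<partial>ntilde n) = ennreal (tail_levy u)"
  unfolding tail_levy_def using AE_ntilde_pos
  by (intro nn_integral_eq_integral integrable_tail_levy) (auto elim!: eventually_mono)

lemma tail_levy_nonneg: "0 \<le> u \<Longrightarrow> 0 \<le> tail_levy u"
  unfolding tail_levy_def using AE_ntilde_pos
  by (intro integral_nonneg_AE) (auto elim!: eventually_mono)

lemma levy_eq_mult_tail_levy: "0 \<le> u \<Longrightarrow> levy u = u * tail_levy u"
proof (cases "u = 0")
  case False
  assume "0 \<le> u"
  with False have u: "0 < u" by simp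
  have "ennreal (tail_levy u) = ennreal (levy u / u)"
    using nn_integral_ntilde_eq_tail_levy[of u] nn_integral_ntilde_one_minus_exp[OF u] u by simp
  then have "tail_levy u = levy u / u"
    using u tail_levy_nonneg[of u] levy_nonneg[of u] by (simp add: ennreal_inj)
  then show ?thesis using u by simp
qed (simp add: tail_levy_def)

lemma tail_levy_mono: "0 \<le> u \<Longrightarrow> u \<le> v \<Longrightarrow> tail_levy u \<le> tail_levy v"
  unfolding tail_levy_def using integrable_tail_levy[of u] integrable_tail_levy[of v] AE_ntilde_pos
  by (intro integral_mono_AE) (auto elim!: eventually_mono intro: mult_right_mono)

definition phi :: "real \<Rightarrow> real" where
  "phi u = a*u + b + tail_levy u"

lemma phi_nonneg: "0 \<le> u \<Longrightarrow> 0 \<le> phi u"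
  using a_nonneg b_nonneg tail_levy_nonneg[of u] by (simp add: phi_def)

lemma phi_mono: "0 \<le> u \<Longrightarrow> u \<le> v \<Longrightarrow> phi u \<le> phi v"
  using a_nonneg tail_levy_mono[of u v] by (simp add: phi_def mult_left_mono add_mono)

lemma continuous_on_phi: "continuous_on {0<..} phi"
proof -
  have "continuous_on {0<..} levy" by (rule convex_on_continuous[OF _ convex_on_levy]) simp
  then have "continuous_on {0<..} (\<lambda>u. a*u + b + levy u / u)"
    by (intro continuous_intros) auto
  then show ?thesis
    by (rule continuous_on_cong[THEN iffD1, rotated 2]) (auto simp: phi_def levy_eq_mult_tail_levy)
qed

text \<open>\<open>phi (max u 0)\<close> agrees with \<open>phi\<close> on \<open>{0..t}\<close> and is monotone, hence Borel, on all of \<open>\<real>\<close>.\<close>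

lemma Phi_eq: "Phi a b n t = (\<integral>\<^sup>+u. indicator {0..t} u * inverse (ennreal (phi (max u 0))) \<partial>lborel)"
  unfolding Phi_def
proof (intro nn_integral_cong)
  fix u :: real
  have "ennreal (a*u + b) + (\<integral>\<^sup>+y. ennreal (1 - exp (- u * y)) \<partial>ntilde n) = ennreal (phi u)" if "0 \<le> u"
    using that a_nonneg b_nonneg tail_levy_nonneg[of u] nn_integral_ntilde_eq_tail_levy[of u]
    by (simp add: phi_def flip: ennreal_plus)
  then show "indicator {0..t} u * inverse (ennreal (a*u + b) + (\<integral>\<^sup>+y. ennreal (1 - exp (- u * y)) \<partial>ntilde n))
      = indicator {0..t} u * inverse (ennreal (phi (max u 0)))"
    by (cases "u \<in> {0..t}") auto
qed

lemma has_bochner_integral_tail_levy_diff: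
  assumes "0 \<le> l" "0 \<le> m"
  shows "has_bochner_integral (ntilde n) (\<lambda>y. (1 - exp (-(l*y))) - (1 - exp (-((l+m)*y))))
    (tail_levy l - tail_levy (l+m))"
  using assms
  by (intro has_bochner_integral_diff) (auto simp: has_bochner_integral_iff tail_levy_def integrable_tail_levy)

lemma gen_exp_sum:
  assumes S: "finite S" "S \<subseteq> {0..}"
  shows "gen a b n \<delta> (\<lambda>x. \<Sum>l\<in>S. c l * exp (- l * x)) x
    = (\<Sum>l\<in>S. c l * exp (-(l*x)) * (x * (l * phi l) - \<delta> * l))"
proof -
  let ?f = "\<lambda>x. \<Sum>l\<in>S. c l * exp (- l * x)"
  have d1: "deriv ?f = (\<lambda>x. \<Sum>l\<in>S. c l * - l * exp (- l * x))"
    by (rule deriv_exp_sum[OF S(1)])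
  have d2: "deriv (deriv ?f) = (\<lambda>x. \<Sum>l\<in>S. c l * - l * - l * exp (- l * x))"
    unfolding d1 by (rule deriv_exp_sum[OF S(1)])
  have pw: "?f (x+y) - ?f x - y * deriv ?f x = (\<Sum>l\<in>S. c l * exp (-(l*x)) * (exp (-(l*y)) - 1 + l*y))" for y
    unfolding d1 sum_distrib_left sum_subtractf[symmetric]
    by (intro sum.cong refl) (simp add: algebra_simps flip: exp_add)
  have jump: "(\<integral>y. ?f (x+y) - ?f x - y * deriv ?f x \<partial>n) = (\<Sum>l\<in>S. c l * exp (-(l*x)) * levy l)"
    unfolding pw levy_def using S
    by (subst Bochner_Integration.integral_sum) (auto intro!: integrable_mult_right integrable_levy)
  show ?thesis
    unfolding gen_def jump unfolding d2 unfolding d1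
    unfolding sum_distrib_left sum_subtractf[symmetric] sum.distrib[symmetric]
    using S by (intro sum.cong refl)
      (auto simp: phi_def levy_eq_mult_tail_levy algebra_simps power2_eq_square)
qed

end

locale cbci_Phi_finite = cbci_mechanism +
  assumes Phi_1_finite: "Phi a b n 1 < \<infinity>"
begin

text \<open>If \<open>phi\<close> vanished at some \<open>u > 0\<close>, by monotonicity it would vanish on \<open>{0..u}\<close>,
  making the integrand of \<open>Phi a b n 1\<close> infinite on a set of positive measure.\<close>

lemma phi_pos: assumes u: "0 < u" shows "0 < phi u"
proof (rule ccontr)
  assume "\<not> 0 < phi u"
  then have "phi u = 0" using phi_nonneg[of u] u by simp
  define e where "e = min u 1"
  have e: "0 < e" "e \<le> 1" "e \<le> u" using u by (auto simp: e_def)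
  have "\<infinity> = (\<integral>\<^sup>+v. \<infinity> * indicator {0..e} v \<partial>lborel)"
    using e by (subst nn_integral_cmult_indicator) (auto simp: ennreal_top_mult)
  also have "\<dots> \<le> (\<integral>\<^sup>+v. indicator {0..1} v * inverse (ennreal (phi (max v 0))) \<partial>lborel)"
  proof (intro nn_integral_mono)
    fix v :: real
    show "\<infinity> * indicator {0..e} v \<le> indicator {0..1} v * inverse (ennreal (phi (max v 0)))"
    proof (cases "v \<in> {0..e}")
      case True
      then have "phi v = 0"
        using e \<open>phi u = 0\<close> phi_nonneg[of v] phi_mono[of v u] by auto
      then show ?thesis using True e by auto
    qed auto
  qed
  also have "\<dots> = Phi a b n 1" by (simp add: Phi_eq)
  also have "\<dots> < \<infinity>" by (rule Phi_1_finite)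
  finally show False by simp
qed

lemma Phi_has_real_derivative:
  assumes t: "0 < t"
  shows "((\<lambda>t. enn2real (Phi a b n t)) has_real_derivative 1 / phi t) (at t)"
proof -
  define c where "c = min (t/2) 1"
  have c: "0 < c" "c < t" "c \<le> 1" using t by (auto simp: c_def)
  have "mono (\<lambda>u. phi (max u 0))" by (auto simp: mono_def intro!: phi_mono)
  then have [measurable]: "(\<lambda>u. phi (max u 0)) \<in> borel_measurable borel"
    by (rule borel_measurable_mono)
  have "((\<lambda>x. enn2real (\<integral>\<^sup>+u. indicator {0..x} u * inverse (ennreal (phi (max u 0))) \<partial>lborel))
      has_real_derivative 1 / phi t) (at t)"
  proof (rule enn2real_nn_integral_has_real_derivative)
    have "(\<integral>\<^sup>+u. indicator {0..c} u * inverse (ennreal (phi (max u 0))) \<partial>lborel) \<le> Phi a b n 1"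
      unfolding Phi_eq using c by (intro nn_integral_mono) (auto simp: indicator_def)
    then show "(\<integral>\<^sup>+u. indicator {0..c} u * inverse (ennreal (phi (max u 0))) \<partial>lborel) < \<infinity>"
      using Phi_1_finite by simp
    show "inverse (ennreal (phi (max u 0))) = ennreal (1 / phi u)" if "c \<le> u" for u
      using that c phi_pos[of u] by (simp add: inverse_ennreal divide_inverse max_def)
    have "continuous_on {c..} phi"
      using c by (intro continuous_on_subset[OF continuous_on_phi]) auto
    then show "continuous_on {c..} (\<lambda>u. 1 / phi u)"
    proof (intro continuous_intros ballI)
      show "phi u \<noteq> 0" if "u \<in> {c..}" for u using that c phi_pos[of u] by simp
    qed
  qed (use c phi_pos in \<open>auto simp: less_imp_le\<close>)
  then show ?thesis by (simp add: Phi_eq)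
qed

end

locale cbci_stationary = cbci_Phi_finite +
  fixes \<delta> :: real and \<nu> :: "real measure"
  assumes prob_space_nu: "prob_space \<nu>" and sets_nu [measurable_cong]: "sets \<nu> = sets borel"
    and nu_neg: "emeasure \<nu> {..<0} = 0"
    and laplace_nu: "\<And>lam. 0 \<le> lam \<Longrightarrow> (\<integral>x. exp (- lam * x) \<partial>\<nu>) = exp (- \<delta> * enn2real (Phi a b n lam))"
begin

lemma finite_measure_nu: "finite_measure \<nu>"
proof -
  interpret prob_space \<nu> by (fact prob_space_nu)
  show ?thesis by unfold_locales
qed

lemma AE_nu_nonneg: "AE x in \<nu>. 0 \<le> x"
  using nu_neg by (intro AE_I'[of "{..<0}"]) (auto simp: null_sets_def sets_eq_imp_space_eq[OF sets_nu])

lemmas integrable_exp_neg_mult_nu = integrable_exp_neg_mult[OF finite_measure_nu sets_nu AE_nu_nonneg]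
lemmas integrable_mult_exp_neg_mult_nu = integrable_mult_exp_neg_mult[OF finite_measure_nu sets_nu AE_nu_nonneg]

definition laplace :: "real \<Rightarrow> real" where
  "laplace s = (\<integral>x. exp (-(s*x)) \<partial>\<nu>)"

definition laplace_moment :: "real \<Rightarrow> real" where
  "laplace_moment s = (\<integral>x. x * exp (-(s*x)) \<partial>\<nu>)"

text \<open>The one place where stationarity of \<open>\<nu>\<close> enters: differentiate the Laplace transform
  \<open>exp (- \<delta> * Phi s)\<close> using \<open>Phi' = 1 / phi\<close>.\<close>

lemma delta_laplace_eq: assumes s: "0 < s" shows "\<delta> * laplace s = phi s * laplace_moment s"
proof -
  have "((\<lambda>u. exp (- \<delta> * enn2real (Phi a b n u))) has_real_derivative
      exp (- \<delta> * enn2real (Phi a b n s)) * (- \<delta> * (1 / phi s))) (at s)"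
    by (intro DERIV_chain2[OF DERIV_exp] DERIV_cmult Phi_has_real_derivative s)
  then have "(laplace has_real_derivative exp (- \<delta> * enn2real (Phi a b n s)) * (- \<delta> * (1 / phi s))) (at s)"
  proof (rule has_field_derivative_transform_within_open[where S = "{0<..}"])
    show "exp (- \<delta> * enn2real (Phi a b n u)) = laplace u" if "u \<in> {0<..}" for u
      using that laplace_nu[of u] by (simp add: laplace_def)
  qed (use s in auto)
  moreover have "(laplace has_real_derivative - laplace_moment s) (at s)"
    unfolding laplace_def laplace_moment_def
    by (rule laplace_transform_has_real_derivative[OF finite_measure_nu sets_nu AE_nu_nonneg s])
  ultimately have "exp (- \<delta> * enn2real (Phi a b n s)) * (- \<delta> * (1 / phi s)) = - laplace_moment s"
    by (rule DERIV_unique)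
  moreover have "exp (- \<delta> * enn2real (Phi a b n s)) = laplace s"
    using s laplace_nu[of s] by (simp add: laplace_def)
  ultimately show ?thesis using phi_pos[OF s] by (simp add: field_simps)
qed

lemma has_bochner_integral_laplace_moment:
  assumes "0 \<le> l" "0 \<le> m"
  shows "has_bochner_integral \<nu> (\<lambda>x. l * k * (x * exp (-((l+m)*x)))) (l * k * laplace_moment (l+m))"
  using assms integrable_mult_exp_neg_mult_nu[of "l+m"]
  by (intro has_bochner_integral_mult_right) (auto simp: laplace_moment_def has_bochner_integral_iff)

lemma has_bochner_integral_dirichlet_exp:
  assumes "0 \<le> l" "0 \<le> m"
  shows "has_bochner_integral \<nu> (\<lambda>x. exp (-((l+m)*x)) * (\<delta> * l - x * (l * phi l)))
    (l * (phi (l+m) - phi l) * laplace_moment (l+m))"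
proof (cases "l = 0")
  case False
  with assms have s: "0 < l + m" by simp
  have "has_bochner_integral \<nu> (\<lambda>x. \<delta> * l * exp (-((l+m)*x)) - l * phi l * (x * exp (-((l+m)*x))))
      (\<delta> * l * laplace (l+m) - l * phi l * laplace_moment (l+m))"
    using integrable_exp_neg_mult_nu[of "l+m"] has_bochner_integral_laplace_moment[OF assms, of "phi l"] s
    by (intro has_bochner_integral_diff has_bochner_integral_mult_right)
      (auto simp: laplace_def has_bochner_integral_iff)
  moreover have "(\<lambda>x. \<delta> * l * exp (-((l+m)*x)) - l * phi l * (x * exp (-((l+m)*x))))
      = (\<lambda>x. exp (-((l+m)*x)) * (\<delta> * l - x * (l * phi l)))"
    by (simp add: fun_eq_iff algebra_simps)
  moreover have "\<delta> * l * laplace (l+m) - l * phi l * laplace_moment (l+m)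
      = l * (phi (l+m) - phi l) * laplace_moment (l+m)"
  proof -
    have "\<delta> * l * laplace (l+m) = l * (\<delta> * laplace (l+m))" by simp
    also have "\<dots> = l * (phi (l+m) * laplace_moment (l+m))" by (simp only: delta_laplace_eq[OF s])
    finally show ?thesis by (simp add: algebra_simps)
  qed
  ultimately show ?thesis by simp
qed (simp add: has_bochner_integral_zero)

context
  fixes S T :: "real set" and c d f g :: "real \<Rightarrow> real"
  assumes S: "finite S" "S \<subseteq> {0..}" and T: "finite T" "T \<subseteq> {0..}"
    and f: "f = (\<lambda>x. \<Sum>l\<in>S. c l * exp (- l * x))" and g: "g = (\<lambda>x. \<Sum>m\<in>T. d m * exp (- m * x))"
begin

lemma dirichlet_exp_sums:
  "dirichlet a b n \<delta> \<nu> f g = (\<Sum>l\<in>S. \<Sum>m\<in>T. c l * d m * (l * (phi (l+m) - phi l) * laplace_moment (l+m)))"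
proof -
  have "(- gen a b n \<delta> f x) * g x
      = (\<Sum>l\<in>S. \<Sum>m\<in>T. c l * d m * (exp (-((l+m)*x)) * (\<delta> * l - x * (l * phi l))))" for x
    unfolding f gen_exp_sum[OF S] unfolding g sum_negf[symmetric] sum_product
    by (intro sum.cong refl) (simp add: algebra_simps flip: exp_add)
  moreover have "has_bochner_integral \<nu>
      (\<lambda>x. \<Sum>l\<in>S. \<Sum>m\<in>T. c l * d m * (exp (-((l+m)*x)) * (\<delta> * l - x * (l * phi l))))
      (\<Sum>l\<in>S. \<Sum>m\<in>T. c l * d m * (l * (phi (l+m) - phi l) * laplace_moment (l+m)))"
    using S T by (intro has_bochner_integral_sum has_bochner_integral_mult_right
        has_bochner_integral_dirichlet_exp) auto
  ultimately show ?thesis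
    unfolding dirichlet_def by (simp add: has_bochner_integral_integral_eq)
qed

lemma diffusion_exp_sums:
  "(\<integral>x. x * deriv f x * deriv g x \<partial>\<nu>) = (\<Sum>l\<in>S. \<Sum>m\<in>T. c l * d m * (l * m * laplace_moment (l+m)))"
proof -
  have "x * deriv f x * deriv g x = (\<Sum>l\<in>S. \<Sum>m\<in>T. c l * d m * (l * m * (x * exp (-((l+m)*x)))))" for x
    unfolding f g deriv_exp_sum[OF S(1)] deriv_exp_sum[OF T(1)] mult.assoc
    unfolding sum_product unfolding sum_distrib_left
    by (intro sum.cong refl) (simp add: algebra_simps flip: exp_add)
  moreover have "has_bochner_integral \<nu>
      (\<lambda>x. \<Sum>l\<in>S. \<Sum>m\<in>T. c l * d m * (l * m * (x * exp (-((l+m)*x)))))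
      (\<Sum>l\<in>S. \<Sum>m\<in>T. c l * d m * (l * m * laplace_moment (l+m)))"
    using S T by (intro has_bochner_integral_sum has_bochner_integral_mult_right
        has_bochner_integral_laplace_moment) auto
  ultimately show ?thesis by (simp add: has_bochner_integral_integral_eq)
qed

lemma jump_exp_sums:
  "(\<integral>x. x * (\<integral>y. deriv f (x + y) * (g (x + y) - g x) \<partial>ntilde n) \<partial>\<nu>)
    = (\<Sum>l\<in>S. \<Sum>m\<in>T. c l * d m * (l * (tail_levy (l+m) - tail_levy l) * laplace_moment (l+m)))"
proof -
  have pw: "deriv f (x + y) * (g (x + y) - g x) = (\<Sum>l\<in>S. \<Sum>m\<in>T. c l * d m * (- l * exp (-((l+m)*x)))
      * ((1 - exp (-(l*y))) - (1 - exp (-((l+m)*y)))))" for x y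
    unfolding f g deriv_exp_sum[OF S(1)] sum_subtractf[symmetric] sum_product
    by (intro sum.cong refl) (simp add: algebra_simps flip: exp_add)
  have inner: "x * (\<integral>y. deriv f (x + y) * (g (x + y) - g x) \<partial>ntilde n)
      = (\<Sum>l\<in>S. \<Sum>m\<in>T. c l * d m * (l * (tail_levy (l+m) - tail_levy l) * (x * exp (-((l+m)*x)))))" for x
  proof -
    have "has_bochner_integral (ntilde n) (\<lambda>y. deriv f (x + y) * (g (x + y) - g x))
        (\<Sum>l\<in>S. \<Sum>m\<in>T. c l * d m * (- l * exp (-((l+m)*x))) * (tail_levy l - tail_levy (l+m)))"
      unfolding pw using S T by (intro has_bochner_integral_sum has_bochner_integral_mult_right
          has_bochner_integral_tail_levy_diff) auto
    then show ?thesis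
      by (simp add: has_bochner_integral_integral_eq sum_distrib_left algebra_simps)
  qed
  have "has_bochner_integral \<nu>
      (\<lambda>x. \<Sum>l\<in>S. \<Sum>m\<in>T. c l * d m * (l * (tail_levy (l+m) - tail_levy l) * (x * exp (-((l+m)*x)))))
      (\<Sum>l\<in>S. \<Sum>m\<in>T. c l * d m * (l * (tail_levy (l+m) - tail_levy l) * laplace_moment (l+m)))"
    using S T by (intro has_bochner_integral_sum has_bochner_integral_mult_right
        has_bochner_integral_laplace_moment) auto
  then show ?thesis unfolding inner by (simp add: has_bochner_integral_integral_eq)
qed

end

end

theorem proposition3p2:
  fixes a b \<delta> :: real and n \<nu> :: "real measure"
  assumes a: "a \<ge> 0" and b: "b \<ge> 0"
    and n_sets: "sets n = sets borel" and n_supp: "emeasure n {..0} = 0"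
    and n_int: "(\<integral>\<^sup>+ y. ennreal (min (y\<^sup>2) y) \<partial>n) < \<infinity>"
    and Phi1: "Phi a b n 1 < \<infinity>"
    and delta: "\<delta> > 0"
    and nu_prob: "prob_space \<nu>" and nu_sets: "sets \<nu> = sets borel"
    and nu_supp: "emeasure \<nu> {..<0} = 0"
    and nu_laplace: "\<And>lam. lam \<ge> 0 \<Longrightarrow>
        (\<integral> x. exp (- lam * x) \<partial>\<nu>) = exp (- \<delta> * enn2real (Phi a b n lam))"
    and f: "f \<in> F0" and g: "g \<in> F0"
  shows "dirichlet a b n \<delta> \<nu> f g =
           a * (\<integral> x. x * deriv f x * deriv g x \<partial>\<nu>)
         + (\<integral> x. x * (\<integral> y. deriv f (x + y) * (g (x + y) - g x) \<partial>ntilde n) \<partial>\<nu>)"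
proof -
  interpret C: cbci_stationary a b n \<delta> \<nu>
    by (intro cbci_stationary.intro cbci_Phi_finite.intro cbci_mechanism.intro
        cbci_Phi_finite_axioms.intro cbci_stationary_axioms.intro) (fact assms)+
  from f obtain S c where S: "finite S" "S \<subseteq> {0..}" and fS: "f = (\<lambda>x. \<Sum>l\<in>S. c l * exp (- l * x))"
    unfolding F0_def by blast
  from g obtain T d where T: "finite T" "T \<subseteq> {0..}" and gT: "g = (\<lambda>x. \<Sum>m\<in>T. d m * exp (- m * x))"
    unfolding F0_def by blast
  have "dirichlet a b n \<delta> \<nu> f g
      = (\<Sum>l\<in>S. \<Sum>m\<in>T. c l * d m * (l * (C.phi (l+m) - C.phi l) * C.laplace_moment (l+m)))"
    by (rule C.dirichlet_exp_sums[OF S T fS gT])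
  also have "\<dots> = a * (\<Sum>l\<in>S. \<Sum>m\<in>T. c l * d m * (l * m * C.laplace_moment (l+m)))
      + (\<Sum>l\<in>S. \<Sum>m\<in>T. c l * d m * (l * (C.tail_levy (l+m) - C.tail_levy l) * C.laplace_moment (l+m)))"
    by (simp add: C.phi_def sum_distrib_left sum.distrib[symmetric] algebra_simps)
  also have "\<dots> = a * (\<integral> x. x * deriv f x * deriv g x \<partial>\<nu>)
      + (\<integral> x. x * (\<integral> y. deriv f (x + y) * (g (x + y) - g x) \<partial>ntilde n) \<partial>\<nu>)"
    by (simp only: C.diffusion_exp_sums[OF S T fS gT] C.jump_exp_sums[OF S T fS gT])
  finally show ?thesis .
qed

end
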